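(* Let $m\ge 1$ and consider any complete run of the labeled chip-firing process on $\mathbb{Z}$ starting with $2m$ chips at site $0$. For integers $x,y\ge 0$, let the firing move $(x,y)$ denote the $(\min(x,y)+1)$-th to last firing move performed at site $x-y$ in this run (when it exists). Let $(x,y)$ be a firing move with $0\le x,y\le m-1$. Then: (1) the firing move $(x,y)$ takes place after the firing moves $(x+1,y)$ and $(x,y+1)$, whenever these firing moves exist; (2) when the firing move $(x,y)$ occurs, there are exactly $2$ chips present at the site that is firing.
   Context: Labeled chip-firing on the infinite path graph $\mathbb{Z}$ (each integer $i$ adjacent to $i-1$ and $i+1$): $2m$ chips carrying distinct labels, labeled $-m,\dots,-1,1,\dots,m$, are placed at site $0$. A firing move consists of choosing two chips with labels $a<b$ located at a common site $i$, and moving chip $a$ to site $i-1$ and chip $b$ to site $i+1$. A complete run is a sequence of firing moves, each legal in the configuration it is applied to, ending in a configuration where all chips occupy distinct sites (so no further firing move is possible). *)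

theory Defs
  imports Main
begin

text \<open>Chips are identified with their
labels; the chips of the process started with 2m chips are the labels
-m,...,-1,1,...,m. A configuration maps each label to its current site.\<close>

definition chips :: "nat \<Rightarrow> int set" where
  "chips m = {l. - int m \<le> l \<and> l \<le> int m \<and> l \<noteq> 0}"

type_synonym config = "int \<Rightarrow> int"

definition fire :: "config \<Rightarrow> int \<times> int \<Rightarrow> config" where
  "fire c ab = (case ab of (a, b) \<Rightarrow> c(a := c a - 1, b := c b + 1))"

definition legal :: "nat \<Rightarrow> config \<Rightarrow> int \<times> int \<Rightarrow> bool" where
  "legal m c ab = (case ab of (a, b) \<Rightarrow>
      a \<in> chips m \<and> b \<in> chips m \<and> a < b \<and> c a = c b)"

definition init_conf :: config where
  "init_conf = (\<lambda>_. 0)"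

definition conf_at :: "(int \<times> int) list \<Rightarrow> nat \<Rightarrow> config" where
  "conf_at mv i = foldl fire init_conf (take i mv)"

definition complete_run :: "nat \<Rightarrow> (int \<times> int) list \<Rightarrow> bool" where
  "complete_run m mv =
     ((\<forall>i < length mv. legal m (conf_at mv i) (mv ! i)) \<and>
      inj_on (conf_at mv (length mv)) (chips m))"

definition move_site :: "(int \<times> int) list \<Rightarrow> nat \<Rightarrow> int" where
  "move_site mv i = conf_at mv i (fst (mv ! i))"

definition fire_indices :: "(int \<times> int) list \<Rightarrow> int \<Rightarrow> nat list" where
  "fire_indices mv s = filter (\<lambda>i. move_site mv i = s) [0..<length mv]"

definition fmove :: "(int \<times> int) list \<Rightarrow> nat \<Rightarrow> nat \<Rightarrow> nat option" where
  "fmove mv x y =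
     (let xs = fire_indices mv (int x - int y); k = min x y in
      if k < length xs then Some (xs ! (length xs - 1 - k)) else None)"

definition chips_at :: "nat \<Rightarrow> config \<Rightarrow> int \<Rightarrow> nat" where
  "chips_at m c s = card {l \<in> chips m. c l = s}"

end

theory Submission
  imports Defs
begin

text \<open>Chip counts only depend on the sequence of sites at which firings happen. The stable
configuration reached from 2m chips at 0 has one chip on each site of [-m, m] - {0}, and its
odometer is w(s) = 1 + 2 + ... + (m - |s|): w has the right discrete Laplacian, no legal firing
sequence ever exceeds it (least action), and a complete run attains it because the difference is
convex on each half-line and vanishes from m on. So R(s) = w(s) - (firings at s so far) counts
the firings still to come at s, and the move (x, y) is the firing at s = x - y made when
R(s) = min(x, y) + 1.

The heart of the proof is an invariant of R preserved by every legal firing: for 0 < s < m,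
R(s) \<le> m - s implies R(s) \<le> R(s - 1), and R(s) < m - s implies R(s - 1) \<le> R(s) + 1,
together with its mirror image. At the move (x, y) with x > y (x < y is symmetric, x = y
similar) it forces R(s - 1) = y + 1 and R(s + 1) = y, so exactly 2 chips sit at s, and the moves
(x + 1, y) and (x, y + 1) happen while R(s + 1) = y + 1 and R(s - 1) = y + 2, hence earlier.\<close>

section \<open>Firing sequences and the stabilizing odometer\<close>

definition fire_count :: "(nat \<Rightarrow> int) \<Rightarrow> nat \<Rightarrow> int \<Rightarrow> int" where
  "fire_count \<sigma> t s = int (length (filter (\<lambda>i. \<sigma> i = s) [0..<t]))"

definition init_chips :: "nat \<Rightarrow> int \<Rightarrow> int" where
  "init_chips m s = (if s = 0 then 2 * int m else 0)"

definition chip_count :: "nat \<Rightarrow> (nat \<Rightarrow> int) \<Rightarrow> nat \<Rightarrow> int \<Rightarrow> int" where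
  "chip_count m \<sigma> t s =
     init_chips m s + fire_count \<sigma> t (s - 1) + fire_count \<sigma> t (s + 1) - 2 * fire_count \<sigma> t s"

definition stabilizing :: "nat \<Rightarrow> (nat \<Rightarrow> int) \<Rightarrow> nat \<Rightarrow> bool" where
  "stabilizing m \<sigma> n \<longleftrightarrow>
     (\<forall>t < n. 2 \<le> chip_count m \<sigma> t (\<sigma> t)) \<and> (\<forall>s. chip_count m \<sigma> n s \<le> 1)"

definition final_chips :: "nat \<Rightarrow> int \<Rightarrow> int" where
  "final_chips m s = (if s \<noteq> 0 \<and> \<bar>s\<bar> \<le> int m then 1 else 0)"

definition odometer :: "nat \<Rightarrow> int \<Rightarrow> int" where
  "odometer m s = \<Sum>{1 .. int m - \<bar>s\<bar>}"

text \<open>By \<open>residual_remaining\<close> below, \<open>residual m \<sigma> t s\<close> is the number of firings at \<open>s\<close>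
from move \<open>t\<close> on.\<close>

definition residual :: "nat \<Rightarrow> (nat \<Rightarrow> int) \<Rightarrow> nat \<Rightarrow> int \<Rightarrow> int" where
  "residual m \<sigma> t s = odometer m s - fire_count \<sigma> t s"

definition residual_chips :: "nat \<Rightarrow> (int \<Rightarrow> int) \<Rightarrow> int \<Rightarrow> int" where
  "residual_chips m R s = final_chips m s + 2 * R s - R (s - 1) - R (s + 1)"

definition reflect :: "(nat \<Rightarrow> int) \<Rightarrow> nat \<Rightarrow> int" where
  "reflect \<sigma> i = - \<sigma> i"

lemma fire_count_0 [simp]: "fire_count \<sigma> 0 s = 0"
  by (simp add: fire_count_def)

lemma fire_count_Suc: "fire_count \<sigma> (Suc t) s = fire_count \<sigma> t s + of_bool (\<sigma> t = s)"
  by (simp add: fire_count_def)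

lemma fire_count_nonneg: "0 \<le> fire_count \<sigma> t s"
  by (simp add: fire_count_def)

lemma fire_count_mono: "t \<le> t' \<Longrightarrow> fire_count \<sigma> t s \<le> fire_count \<sigma> t' s"
  by (induction t' rule: dec_induct) (simp_all add: fire_count_Suc)

lemma chip_count_Suc:
  "chip_count m \<sigma> (Suc t) s = chip_count m \<sigma> t s
     + of_bool (\<sigma> t = s - 1) + of_bool (\<sigma> t = s + 1) - 2 * of_bool (\<sigma> t = s)"
  by (auto simp: chip_count_def fire_count_Suc)

lemma chip_count_nonneg:
  assumes "stabilizing m \<sigma> n" "t \<le> n"
  shows "0 \<le> chip_count m \<sigma> t s"
  using assms(2)
proof (induction t arbitrary: s)
  case 0
  then show ?case by (simp add: chip_count_def init_chips_def)
next
  case (Suc t)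
  then have "0 \<le> chip_count m \<sigma> t s" "2 \<le> chip_count m \<sigma> t (\<sigma> t)"
    using assms(1) by (auto simp: stabilizing_def)
  then show ?case by (auto simp: chip_count_Suc)
qed

lemma reflect_reflect [simp]: "reflect (reflect \<sigma>) = \<sigma>"
  by (simp add: reflect_def fun_eq_iff)

lemma fire_count_reflect: "fire_count (reflect \<sigma>) t s = fire_count \<sigma> t (- s)"
  unfolding fire_count_def reflect_def by (metis minus_equation_iff)

lemma chip_count_reflect: "chip_count m (reflect \<sigma>) t s = chip_count m \<sigma> t (- s)"
proof -
  have "- (s - 1) = - s + 1" "- (s + 1) = - s - 1" by simp_all
  then show ?thesis by (simp only: chip_count_def fire_count_reflect init_chips_def) simp
qed

lemma stabilizing_reflect: "stabilizing m \<sigma> n \<Longrightarrow> stabilizing m (reflect \<sigma>) n"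
  by (simp add: stabilizing_def chip_count_reflect) (simp add: reflect_def)

lemma sum_Icc_1_int_rec: "0 \<le> k \<Longrightarrow> \<Sum>{1..k} = \<Sum>{1..k - 1} + (k :: int)"
  using atLeastAtMostPlus1_int_conv[of 1 "k - 1"] by (cases "k = 0") simp_all

lemma sum_Icc_1_int_ge: "0 \<le> k \<Longrightarrow> k \<le> \<Sum>{1..k :: int}"
  using sum_Icc_1_int_rec[of k] sum_nonneg[of "{1..k - 1}" "\<lambda>j. j"] by simp

lemma sum_Icc_1_int_second_diff:
  "\<Sum>{1..k + 1} + \<Sum>{1..k - 1} - 2 * \<Sum>{1..k} = of_bool (0 \<le> (k :: int))"
  using sum_Icc_1_int_rec[of k] sum_Icc_1_int_rec[of "k + 1"] by (cases "0 \<le> k") simp_all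

lemma odometer_uminus [simp]: "odometer m (- s) = odometer m s"
  by (simp add: odometer_def)

lemma odometer_beyond: "int m \<le> \<bar>s\<bar> \<Longrightarrow> odometer m s = 0"
  by (simp add: odometer_def)

lemma odometer_laplacian:
  "init_chips m s + odometer m (s - 1) + odometer m (s + 1) - 2 * odometer m s = final_chips m s"
proof (cases "s = 0")
  case True
  then show ?thesis
    using sum_Icc_1_int_rec[of "int m"] odometer_uminus[of m 1]
    by (simp add: odometer_def init_chips_def final_chips_def)
next
  case False
  define k where "k = int m - \<bar>s\<bar>"
  have "odometer m (s - 1) + odometer m (s + 1) = \<Sum>{1..k + 1} + \<Sum>{1..k - 1}"
    using False by (cases "0 < s") (simp_all add: odometer_def k_def algebra_simps)
  moreover have "odometer m s = \<Sum>{1..k}" "final_chips m s = of_bool (0 \<le> k)"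
    using False by (simp_all add: odometer_def final_chips_def k_def)
  ultimately show ?thesis
    using False sum_Icc_1_int_second_diff[of k] by (simp add: init_chips_def)
qed

lemma chip_count_residual: "chip_count m \<sigma> t s = residual_chips m (residual m \<sigma> t) s"
  using odometer_laplacian[of m s]
  by (simp add: chip_count_def residual_chips_def residual_def)

lemma residual_0 [simp]: "residual m \<sigma> 0 = odometer m"
  by (simp add: residual_def fun_eq_iff)

lemma residual_Suc:
  "residual m \<sigma> (Suc t) = (residual m \<sigma> t)(\<sigma> t := residual m \<sigma> t (\<sigma> t) - 1)"
  by (auto simp: residual_def fire_count_Suc fun_eq_iff)

lemma residual_antimono: "t \<le> t' \<Longrightarrow> residual m \<sigma> t' s \<le> residual m \<sigma> t s"
  by (simp add: residual_def fire_count_mono)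

lemma residual_reflect: "residual m (reflect \<sigma>) t = (\<lambda>s. residual m \<sigma> t (- s))"
  by (simp add: residual_def fire_count_reflect fun_eq_iff)

section \<open>Least action and the final odometer\<close>

lemma residual_nonneg:
  assumes "stabilizing m \<sigma> n" "t \<le> n"
  shows "0 \<le> residual m \<sigma> t s"
  using assms(2)
proof (induction t arbitrary: s)
  case 0
  show ?case by (auto simp: odometer_def intro!: sum_nonneg)
next
  case (Suc t)
  then have nonneg: "\<And>s. 0 \<le> residual m \<sigma> t s" by simp
  have "1 \<le> residual m \<sigma> t (\<sigma> t)"
  proof -
    have "2 \<le> residual_chips m (residual m \<sigma> t) (\<sigma> t)"
      using assms(1) Suc.prems by (simp add: stabilizing_def flip: chip_count_residual)
    then show ?thesis
      using nonneg[of "\<sigma> t - 1"] nonneg[of "\<sigma> t + 1"]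
      by (simp add: residual_chips_def final_chips_def split: if_splits)
  qed
  then show ?case using nonneg[of s] by (simp add: residual_Suc)
qed

lemma residual_beyond:
  assumes "stabilizing m \<sigma> n" "t \<le> n" "int m \<le> \<bar>s\<bar>"
  shows "residual m \<sigma> t s = 0"
  using residual_nonneg[OF assms(1,2), of s] fire_count_nonneg[of \<sigma> t s]
  by (simp add: residual_def odometer_beyond[OF assms(3)])

lemma convex_slope_mono:
  fixes d :: "int \<Rightarrow> int"
  assumes convex: "\<And>s. 1 \<le> s \<Longrightarrow> 2 * d s \<le> d (s - 1) + d (s + 1)"
    and "0 \<le> i" "i \<le> j"
  shows "d (i + 1) - d i \<le> d (j + 1) - d j"
  using assms(3)
proof (induction j rule: int_ge_induct)
  case (step j)
  then show ?case using convex[of "j + 1"] \<open>0 \<le> i\<close> by simp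
qed simp

lemma convex_eventually_zero_antimono:
  fixes d :: "int \<Rightarrow> int"
  assumes convex: "\<And>s. 1 \<le> s \<Longrightarrow> 2 * d s \<le> d (s - 1) + d (s + 1)"
    and zero: "\<And>s. M \<le> s \<Longrightarrow> d s = 0"
    and "0 \<le> j"
  shows "d (j + 1) \<le> d j"
  using convex_slope_mono[OF convex \<open>0 \<le> j\<close>, of "max j M"] zero[of "max j M"] zero[of "max j M + 1"]
  by simp

lemma convex_eventually_zero_vanishes:
  fixes d :: "int \<Rightarrow> int"
  assumes convex: "\<And>s. 1 \<le> s \<Longrightarrow> 2 * d s \<le> d (s - 1) + d (s + 1)"
    and zero: "\<And>s. M \<le> s \<Longrightarrow> d s = 0"
    and "d 0 \<le> d 1" "0 \<le> j"
  shows "d j = 0"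
proof -
  have flat: "d (k + 1) = d k" if "0 \<le> k" for k
    using convex_slope_mono[OF convex order_refl that] convex_eventually_zero_antimono[of d M, OF convex zero that]
      \<open>d 0 \<le> d 1\<close> by simp
  have const: "d k = d 0" if "0 \<le> k" for k
    using that by (induction k rule: int_ge_induct) (simp_all add: flat)
  show ?thesis
    using const[OF \<open>0 \<le> j\<close>] const[of "max 0 M"] zero[of "max 0 M"] by simp
qed

lemma final_residual_convex:
  assumes "stabilizing m \<sigma> n" "1 \<le> s"
  shows "2 * residual m \<sigma> n s \<le> residual m \<sigma> n (s - 1) + residual m \<sigma> n (s + 1)"
proof (cases "s \<le> int m")
  case True
  have "residual_chips m (residual m \<sigma> n) s \<le> 1"
    using assms(1) by (simp add: stabilizing_def flip: chip_count_residual)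
  then show ?thesis
    using True assms(2) by (simp add: residual_chips_def final_chips_def)
next
  case False
  then have "residual m \<sigma> n s = 0"
    using residual_beyond[OF assms(1) order_refl] by simp
  then show ?thesis
    using residual_nonneg[OF assms(1) order_refl] by (simp add: add_nonneg_nonneg)
qed

lemma final_residual_vanishes_right:
  assumes "stabilizing m \<sigma> n" "residual m \<sigma> n 0 \<le> residual m \<sigma> n 1" "0 \<le> s"
  shows "residual m \<sigma> n s = 0"
  using convex_eventually_zero_vanishes[OF final_residual_convex[OF assms(1)] _ assms(2,3)]
    residual_beyond[OF assms(1) order_refl]
  by (metis abs_of_nonneg order.trans of_nat_0_le_iff)

lemma final_residual_zero:
  assumes "stabilizing m \<sigma> n"
  shows "residual m \<sigma> n s = 0"
proof -
  have vanishes: "residual m \<tau> n s = 0"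
    if run: "stabilizing m \<tau> n" and slope: "residual m \<tau> n 0 \<le> residual m \<tau> n 1" for \<tau> s
  proof (cases "0 \<le> s")
    case True
    then show ?thesis by (rule final_residual_vanishes_right[OF run slope])
  next
    case False
    have "residual m (reflect \<tau>) n 0 = 0"
      using final_residual_vanishes_right[OF run slope order_refl] by (simp add: residual_reflect)
    then have "residual m (reflect \<tau>) n 0 \<le> residual m (reflect \<tau>) n 1"
      using residual_nonneg[OF stabilizing_reflect[OF run] order_refl] by simp
    then have "residual m (reflect \<tau>) n (- s) = 0"
      by (rule final_residual_vanishes_right[OF stabilizing_reflect[OF run]]) (use False in simp)
    then show ?thesis by (simp add: residual_reflect)
  qed
  let ?R = "residual m \<sigma> n"
  have "residual_chips m ?R 0 \<le> 1"
    using assms by (simp add: stabilizing_def flip: chip_count_residual)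
  then have "2 * ?R 0 - ?R (- 1) - ?R 1 \<le> 1"
    by (simp add: residual_chips_def final_chips_def)
  then consider "?R 0 \<le> ?R 1" | "?R 0 \<le> ?R (- 1)" by linarith
  then show ?thesis
  proof cases
    case 1
    then show ?thesis by (rule vanishes[OF assms])
  next
    case 2
    then have "residual m (reflect \<sigma>) n 0 \<le> residual m (reflect \<sigma>) n 1"
      by (simp add: residual_reflect)
    from vanishes[OF stabilizing_reflect[OF assms] this, of "- s"] show ?thesis
      by (simp add: residual_reflect)
  qed
qed

corollary residual_remaining:
  "stabilizing m \<sigma> n \<Longrightarrow> residual m \<sigma> t s = fire_count \<sigma> n s - fire_count \<sigma> t s"
  using final_residual_zero[of m \<sigma> n s] by (simp add: residual_def)

section \<open>The tapering invariant\<close>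

definition tapered :: "nat \<Rightarrow> (int \<Rightarrow> int) \<Rightarrow> bool" where
  "tapered m R \<longleftrightarrow> (\<forall>s. 1 \<le> s \<and> s < int m \<longrightarrow>
     (R s \<le> int m - s \<longrightarrow> R s \<le> R (s - 1)) \<and> (R s < int m - s \<longrightarrow> R (s - 1) \<le> R s + 1))"

lemma taperedD:
  assumes "tapered m R" "1 \<le> s" "s < int m"
  shows "R s \<le> int m - s \<Longrightarrow> R s \<le> R (s - 1)"
    and "R s < int m - s \<Longrightarrow> R (s - 1) \<le> R s + 1"
  using assms unfolding tapered_def by blast+

lemma tapered_outward:
  assumes "tapered m R" "\<And>s. 0 \<le> R s" "0 \<le> s" "s < int m" "R s \<le> int m - s"
  shows "R s \<le> R (s + 1) + 1"
proof (cases "R (s + 1) < int m - (s + 1)")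
  case True
  then have "s + 1 < int m" using assms(2)[of "s + 1"] by linarith
  then show ?thesis using taperedD(2)[OF assms(1), of "s + 1"] True assms(3) by simp
next
  case False
  then show ?thesis using assms(5) by linarith
qed

lemma tapered_inward:
  assumes "tapered m R" "tapered m (\<lambda>s. R (- s))" "\<And>s. 0 \<le> R s"
    and "0 \<le> s" "s < int m" "R s \<le> int m - s"
  shows "R (s + 1) + residual_chips m R s \<le> R s + 1"
proof (cases "s = 0")
  case True
  have "R (- 0) \<le> R (- (0 + 1)) + 1"
    by (rule tapered_outward[OF assms(2)]) (use assms True in simp_all)
  then show ?thesis using True by (simp add: residual_chips_def final_chips_def)
next
  case False
  then show ?thesis
    using taperedD(1)[OF assms(1)] assms(4-6) by (simp add: residual_chips_def final_chips_def)
qed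

lemma tapered_fire:
  assumes tap: "tapered m R" "tapered m (\<lambda>s. R (- s))"
    and nonneg: "\<And>s. 0 \<le> R s" "\<And>s. 0 \<le> residual_chips m R s"
    and legal: "2 \<le> residual_chips m R p"
  shows "tapered m (R(p := R p - 1))"
  unfolding tapered_def
proof (intro allI impI)
  fix s assume s: "1 \<le> s \<and> s < int m"
  have inward: "R s + residual_chips m R (s - 1) \<le> R (s - 1) + 1" if "R (s - 1) \<le> int m - s + 1"
    using tapered_inward[OF tap nonneg(1), of "s - 1"] s that by simp
  let ?R' = "R(p := R p - 1)"
  consider "p = s" | "p = s - 1" | "p \<noteq> s" "p \<noteq> s - 1" by blast
  then show "(?R' s \<le> int m - s \<longrightarrow> ?R' s \<le> ?R' (s - 1))
    \<and> (?R' s < int m - s \<longrightarrow> ?R' (s - 1) \<le> ?R' s + 1)"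
  proof cases
    case 1
    have "R s - 1 \<le> R (s - 1)" if "R s - 1 \<le> int m - s"
    proof (cases "R (s - 1) \<le> int m - s + 1")
      case True
      then show ?thesis using inward[OF True] nonneg(2)[of "s - 1"] by linarith
    qed (use that in linarith)
    moreover have "R (s - 1) \<le> R s" if "R s - 1 < int m - s"
      using tapered_outward[OF tap(1) nonneg(1), of s] legal 1 s that
      by (simp add: residual_chips_def final_chips_def)
    ultimately show ?thesis using 1 by simp
  next
    case 2
    have "R s \<le> R (s - 1) - 1" if "R s \<le> int m - s"
    proof (cases "R (s - 1) \<le> int m - s + 1")
      case True
      then show ?thesis using inward[OF True] legal 2 by simp
    qed (use that in linarith)
    then show ?thesis using 2 taperedD(2)[OF tap(1), of s] s by auto
  next
    case 3
    then show ?thesis using taperedD[OF tap(1), of s] s by simp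
  qed
qed

lemma tapered_odometer: "tapered m (odometer m)"
  unfolding tapered_def
proof (intro allI impI)
  fix s assume s: "1 \<le> s \<and> s < int m"
  then have "odometer m (s - 1) = odometer m s + (int m - s + 1)"
    using sum_Icc_1_int_rec[of "int m - s + 1"] by (simp add: odometer_def algebra_simps)
  moreover have "int m - s \<le> odometer m s"
    using s sum_Icc_1_int_ge[of "int m - s"] by (simp add: odometer_def)
  ultimately show "(odometer m s \<le> int m - s \<longrightarrow> odometer m s \<le> odometer m (s - 1))
    \<and> (odometer m s < int m - s \<longrightarrow> odometer m (s - 1) \<le> odometer m s + 1)"
    using s by simp
qed

lemma tapered_residual:
  assumes "stabilizing m \<sigma> n" "t \<le> n"
  shows "tapered m (residual m \<sigma> t)"
  using assms
proof (induction t arbitrary: \<sigma>)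
  case 0
  show ?case by (simp add: tapered_odometer)
next
  case (Suc t)
  then have "t < n" by simp
  let ?R = "residual m \<sigma> t"
  have "tapered m ?R" "tapered m (\<lambda>s. ?R (- s))"
    using Suc.IH[of \<sigma>] Suc.IH[of "reflect \<sigma>"] Suc.prems stabilizing_reflect
    by (simp_all add: residual_reflect)
  moreover have "0 \<le> ?R s" "0 \<le> residual_chips m ?R s" for s
    using residual_nonneg chip_count_nonneg Suc.prems
    by (simp_all add: chip_count_residual)
  moreover have "2 \<le> residual_chips m ?R (\<sigma> t)"
    using Suc.prems \<open>t < n\<close> by (simp add: stabilizing_def chip_count_residual)
  ultimately show ?case unfolding residual_Suc by (rule tapered_fire)
qed

lemma tapered_fire_off_centre:
  assumes "tapered m R" "tapered m (R(s := R s - 1))" "\<And>s. 0 \<le> R s"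
    and "2 \<le> residual_chips m R s" "1 \<le> s" "R s = r + 1" "0 \<le> r" "r < int m - s"
  shows "R (s - 1) = r + 1 \<and> R (s + 1) = r \<and> residual_chips m R s = 2"
proof -
  have "r + 1 \<le> R (s - 1)" using taperedD(1)[OF assms(1), of s] assms(5-8) by simp
  moreover have "R (s - 1) \<le> r + 1" using taperedD(2)[OF assms(2), of s] assms(5-8) by simp
  moreover have "r \<le> R (s + 1)" using tapered_outward[OF assms(1,3), of s] assms(5-8) by simp
  ultimately show ?thesis
    using assms(4-6) by (simp add: residual_chips_def final_chips_def split: if_splits)
qed

lemma tapered_fire_centre:
  assumes "tapered m R" "tapered m (\<lambda>s. R (- s))" "\<And>s. 0 \<le> R s"
    and "2 \<le> residual_chips m R 0" "R 0 = r + 1" "0 \<le> r" "r < int m"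
  shows "R (- 1) = r \<and> R 1 = r \<and> residual_chips m R 0 = 2"
proof -
  have "r \<le> R 1" using tapered_outward[OF assms(1,3), of 0] assms(5-7) by simp
  moreover have "r \<le> R (- 1)" using tapered_outward[OF assms(2), of 0] assms(3,5-7) by simp
  ultimately show ?thesis using assms(4,5) by (simp add: residual_chips_def final_chips_def)
qed

lemma residual_around_firing:
  assumes run: "stabilizing m \<sigma> n" and "i < n"
    and site: "\<sigma> i = int x - int y" and remaining: "residual m \<sigma> i (\<sigma> i) = int (min x y) + 1"
    and "x < m" "y < m"
  shows "residual m \<sigma> i (\<sigma> i + 1) = int (min (x + 1) y)
    \<and> residual m \<sigma> i (\<sigma> i - 1) = int (min x (y + 1))
    \<and> chip_count m \<sigma> i (\<sigma> i) = 2"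
proof -
  have invariants: "tapered m (residual m \<tau> i)" "tapered m (residual m \<tau> (Suc i))"
    "\<And>s. 0 \<le> residual m \<tau> i s" "2 \<le> residual_chips m (residual m \<tau> i) (\<tau> i)"
    if "stabilizing m \<tau> n" for \<tau>
    using tapered_residual[OF that] residual_nonneg[OF that] that \<open>i < n\<close>
    by (simp_all add: stabilizing_def flip: chip_count_residual)
  consider "y < x" | "x = y" | "x < y" by linarith
  then show ?thesis
  proof cases
    case 1
    then show ?thesis
      using tapered_fire_off_centre[OF invariants(1,2,3,4)[OF run, unfolded residual_Suc], of "int y"]
        site remaining \<open>x < m\<close>
      by (simp add: chip_count_residual)
  next
    case 2
    then have "\<sigma> i = 0" using site by simp
    then show ?thesis
      using tapered_fire_centre[OF invariants(1)[OF run]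
          invariants(1)[OF stabilizing_reflect[OF run], unfolded residual_reflect]
          invariants(3,4)[OF run, unfolded \<open>\<sigma> i = 0\<close>], of "int y"]
        2 remaining \<open>y < m\<close>
      by (simp add: chip_count_residual)
  next
    case 3
    let ?\<rho> = "reflect \<sigma>"
    have "?\<rho> i = int y - int x" "residual m ?\<rho> i (?\<rho> i) = int x + 1"
      using site remaining 3 by (simp_all add: reflect_def residual_reflect)
    then have "residual m ?\<rho> i (?\<rho> i - 1) = int x + 1 \<and> residual m ?\<rho> i (?\<rho> i + 1) = int x
        \<and> chip_count m ?\<rho> i (?\<rho> i) = 2"
      using tapered_fire_off_centre[OF invariants[OF stabilizing_reflect[OF run], unfolded residual_Suc],
          of "int x"] 3 \<open>y < m\<close>
      by (simp add: chip_count_residual)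
    then show ?thesis
      using 3 by (simp add: residual_reflect chip_count_reflect reflect_def algebra_simps)
  qed
qed

section \<open>Labelled runs\<close>

lemma finite_chips: "finite (chips m)"
proof -
  have "chips m \<subseteq> {- int m..int m}" by (auto simp: chips_def)
  then show ?thesis using finite_subset by blast
qed

lemma card_chips: "card (chips m) = 2 * m"
proof -
  have "chips m = {- int m..int m} - {0}" by (auto simp: chips_def)
  then show ?thesis by simp
qed

lemma card_fire_pair:
  fixes c :: "'a \<Rightarrow> int"
  assumes "finite A" "a \<in> A" "b \<in> A" "a \<noteq> b" "c a = p" "c b = p"
  shows "int (card {l \<in> A. (c(a := p - 1, b := p + 1)) l = s}) = int (card {l \<in> A. c l = s})
    + of_bool (p = s - 1) + of_bool (p = s + 1) - 2 * of_bool (p = s)"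
proof -
  have count: "int (card {l \<in> A. f l = s}) = (\<Sum>l\<in>A. of_bool (f l = s))" for f :: "'a \<Rightarrow> int"
  proof -
    have "{l \<in> A. f l = s} = A \<inter> {l. f l = s}" by blast
    then show ?thesis using assms(1) by simp
  qed
  have split: "(\<Sum>l\<in>A. g l) = g a + g b + (\<Sum>l\<in>A - {a, b}. g l)" for g :: "'a \<Rightarrow> int"
  proof -
    have "A - {a} - {b} = A - {a, b}" by blast
    then show ?thesis
      using assms(1-4) sum.remove[OF assms(1,2), of g] sum.remove[of "A - {a}" b g] by simp
  qed
  have rest: "(\<Sum>l\<in>A - {a, b}. of_bool ((c(a := p - 1, b := p + 1)) l = s))
      = (\<Sum>l\<in>A - {a, b}. of_bool (c l = s))"
    by (rule sum.cong) auto
  show ?thesis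
    unfolding count split[of "\<lambda>l. of_bool (_ l = s)"] rest using assms(4-6) by auto
qed

lemma conf_at_Suc: "t < length mv \<Longrightarrow> conf_at mv (Suc t) = fire (conf_at mv t) (mv ! t)"
  by (simp add: conf_at_def take_Suc_conv_app_nth)

lemma complete_run_legal_move:
  assumes "complete_run m mv" "t < length mv"
  obtains a b where "mv ! t = (a, b)" "a \<in> chips m" "b \<in> chips m" "a < b"
    "conf_at mv t a = move_site mv t" "conf_at mv t b = move_site mv t"
proof -
  obtain a b where ab: "mv ! t = (a, b)" by (cases "mv ! t")
  have "legal m (conf_at mv t) (mv ! t)" using assms by (simp add: complete_run_def)
  then show ?thesis using that ab by (simp add: legal_def move_site_def)
qed

lemma chips_at_conf_at:
  assumes "complete_run m mv" "t \<le> length mv"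
  shows "int (chips_at m (conf_at mv t) s) = chip_count m (move_site mv) t s"
  using assms(2)
proof (induction t arbitrary: s)
  case 0
  have "conf_at mv 0 = (\<lambda>_. 0)" by (simp add: conf_at_def init_conf_def)
  then show ?case by (simp add: chips_at_def chip_count_def init_chips_def card_chips)
next
  case (Suc t)
  then have "t < length mv" by simp
  then obtain a b where ab: "mv ! t = (a, b)" "a \<in> chips m" "b \<in> chips m" "a < b"
    "conf_at mv t a = move_site mv t" "conf_at mv t b = move_site mv t"
    using complete_run_legal_move[OF assms(1)] by blast
  let ?p = "move_site mv t"
  have "conf_at mv (Suc t) = (conf_at mv t)(a := ?p - 1, b := ?p + 1)"
    using conf_at_Suc[OF \<open>t < length mv\<close>] ab by (simp add: fire_def)
  then show ?case
    using card_fire_pair[OF finite_chips ab(2,3) _ ab(5,6), of s] ab(4) Suc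
    by (simp add: chips_at_def chip_count_Suc)
qed

lemma complete_run_stabilizing:
  assumes run: "complete_run m mv"
  shows "stabilizing m (move_site mv) (length mv)"
  unfolding stabilizing_def
proof (intro conjI allI impI)
  fix t assume t: "t < length mv"
  then obtain a b where ab: "a \<in> chips m" "b \<in> chips m" "a < b"
    "conf_at mv t a = move_site mv t" "conf_at mv t b = move_site mv t"
    using complete_run_legal_move[OF run] by metis
  then have "card {a, b} \<le> chips_at m (conf_at mv t) (move_site mv t)"
    unfolding chips_at_def by (intro card_mono) (auto simp: finite_chips)
  then have "2 \<le> chips_at m (conf_at mv t) (move_site mv t)"
    using ab(3) by simp
  then show "2 \<le> chip_count m (move_site mv) t (move_site mv t)"
    using chips_at_conf_at[OF run, of t "move_site mv t"] t by simp
next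
  fix s
  have "inj_on (conf_at mv (length mv)) (chips m)" using run by (simp add: complete_run_def)
  then have "card {l \<in> chips m. conf_at mv (length mv) l = s} \<le> Suc 0"
    using finite_chips by (subst card_le_Suc0_iff_eq) (auto simp: inj_on_def)
  then show "chip_count m (move_site mv) (length mv) s \<le> 1"
    using chips_at_conf_at[OF run order_refl, of s] by (simp add: chips_at_def)
qed

lemma nth_filter_upt:
  assumes "k < length (filter P [0..<n])"
  shows "filter P [0..<n] ! k < n \<and> P (filter P [0..<n] ! k)
    \<and> length (filter P [0..<filter P [0..<n] ! k]) = k"
  using assms
proof (induction n)
  case (Suc n)
  show ?case
  proof (cases "k < length (filter P [0..<n])")
    case True
    then show ?thesis using Suc.IH by (simp add: nth_append)
  next
    case False
    then have "P n" "k = length (filter P [0..<n])" using Suc.prems by (auto split: if_splits)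
    then show ?thesis by (simp add: nth_append)
  qed
qed simp

lemma fmove_Some:
  assumes "fmove mv x y = Some i"
  shows "i < length mv" "move_site mv i = int x - int y"
    and "fire_count (move_site mv) (length mv) (int x - int y)
      - fire_count (move_site mv) i (int x - int y) = int (min x y) + 1"
proof -
  define xs where "xs = fire_indices mv (int x - int y)"
  define k where "k = length xs - 1 - min x y"
  have "min x y < length xs" and i: "i = xs ! k"
    using assms by (simp_all add: fmove_def xs_def k_def Let_def split: if_splits)
  then have "k < length xs" by (simp add: k_def)
  note nth = nth_filter_upt[OF this[unfolded xs_def fire_indices_def]]
  show "i < length mv" "move_site mv i = int x - int y"
    using nth i by (simp_all add: xs_def fire_indices_def k_def)
  have "fire_count (move_site mv) (length mv) (int x - int y) = int (length xs)"
    by (simp add: fire_count_def xs_def fire_indices_def)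
  moreover have "fire_count (move_site mv) i (int x - int y) = int k"
    using nth i by (simp add: fire_count_def xs_def fire_indices_def k_def)
  ultimately show "fire_count (move_site mv) (length mv) (int x - int y)
      - fire_count (move_site mv) i (int x - int y) = int (min x y) + 1"
    using \<open>min x y < length xs\<close> by (simp add: k_def of_nat_diff)
qed

lemma fmove_residual:
  assumes "complete_run m mv" "fmove mv x y = Some i"
  shows "residual m (move_site mv) i (int x - int y) = int (min x y) + 1"
  using fmove_Some[OF assms(2)] residual_remaining[OF complete_run_stabilizing[OF assms(1)]]
  by simp

lemma fmove_before:
  assumes "complete_run m mv" "fmove mv x y = Some j"
    and "residual m (move_site mv) i (int x - int y) \<le> int (min x y)"
  shows "j < i"
proof (rule ccontr)
  assume "\<not> j < i"
  then show False
    using fmove_residual[OF assms(1,2)] assms(3)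
      residual_antimono[of i j m "move_site mv" "int x - int y"] by simp
qed

theorem lemma2p6:
  fixes m x y i :: nat and mv :: "(int \<times> int) list"
  assumes "m \<ge> 1"
    and "complete_run m mv"
    and "x \<le> m - 1" and "y \<le> m - 1"
    and "fmove mv x y = Some i"
  shows "(\<forall>j. fmove mv (x + 1) y = Some j \<longrightarrow> j < i)
       \<and> (\<forall>j. fmove mv x (y + 1) = Some j \<longrightarrow> j < i)
       \<and> chips_at m (conf_at mv i) (move_site mv i) = 2"
proof -
  let ?\<sigma> = "move_site mv"
  have site: "?\<sigma> i = int x - int y" and "i < length mv"
    using fmove_Some[OF assms(5)] by simp_all
  have around: "residual m ?\<sigma> i (?\<sigma> i + 1) = int (min (x + 1) y)"
      "residual m ?\<sigma> i (?\<sigma> i - 1) = int (min x (y + 1))"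
      "chip_count m ?\<sigma> i (?\<sigma> i) = 2"
    using residual_around_firing[OF complete_run_stabilizing[OF assms(2)] \<open>i < length mv\<close> site]
      fmove_residual[OF assms(2,5)] site assms(1,3,4)
    by simp_all
  show ?thesis
  proof (intro conjI allI impI)
    fix j assume "fmove mv (x + 1) y = Some j"
    then show "j < i"
      by (rule fmove_before[OF assms(2)]) (use around(1) site in \<open>simp add: algebra_simps\<close>)
  next
    fix j assume "fmove mv x (y + 1) = Some j"
    then show "j < i"
      by (rule fmove_before[OF assms(2)]) (use around(2) site in \<open>simp add: algebra_simps\<close>)
  next
    show "chips_at m (conf_at mv i) (?\<sigma> i) = 2"
      using chips_at_conf_at[OF assms(2), of i "?\<sigma> i"] \<open>i < length mv\<close> around(3) by simp
  qed
qed

end
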